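(* (1) $k=|B|=\ell_R((\mathfrak C:_R\mathfrak m)/\mathfrak C)\ge e-r>0$. (2) $k\le\sum_{i\in B}r_i\le e-1$; moreover, if $\sum_{i\in B}r_i=e-1$ then $s_{i_0-1}=c-e$.
   Context: Let $(R,\mathfrak m)$ be a one-dimensional local Noetherian domain with quotient field $K$, not regular, analytically irreducible (the integral closure $\overline R$ of $R$ in $K$ is a DVR and a finite $R$-module) and residually rational. Let $v$ be the valuation of $\overline R$ normalized so a uniformizer $t$ has value 1, $v(R)=\{v(a):a\in R\setminus\{0\}\}$, $\mathfrak C=(R:_K\overline R)=t^c\overline R$ with $c$ the least element of $v(R)$ with $c+\mathbb N\subseteq v(R)$, $\delta=\ell_R(\overline R/R)$, $r=\ell_R((R:_K\mathfrak m)/R)$, $e$ the least positive element of $v(R)$, $n=c-\delta$. Write $v(R)=\{s_0=0<s_1<\cdots\}$ ($s_n=c$), $R_i=\{a\in R:v(a)\ge s_i\}$, $r_i=\ell_R((R:_KR_i)/(R:_KR_{i-1}))$. Let $i_0\in[1,n]$ with $s_{i_0-1}=\min\{y\in v(R):y\ge c-e\}$, $B=\{i_0,\dots,n\}$. Let $x\in\mathfrak m$ with $v(x)=e$, $k=\ell_R(R/(\mathfrak C+xR))$, and $(\mathfrak C:_R\mathfrak m)=\{a\in R:a\mathfrak m\subseteq\mathfrak C\}$. *)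

theory Defs
  imports Main "HOL-Library.Infinite_Set"
begin

text \<open>Ambient field K is the type 'a. R is a subset of K, v a valuation on K - {0}.\<close>

definition Rmod :: "'a::field set \<Rightarrow> 'a set \<Rightarrow> bool" where
  "Rmod R M \<longleftrightarrow> 0 \<in> M \<and> (\<forall>x\<in>M. \<forall>y\<in>M. x + y \<in> M) \<and> (\<forall>a\<in>R. \<forall>x\<in>M. a * x \<in> M)"

definition ideal_of :: "'a::field set \<Rightarrow> 'a set \<Rightarrow> bool" where
  "ideal_of R I \<longleftrightarrow> I \<subseteq> R \<and> Rmod R I"

definition prime_ideal_of :: "'a::field set \<Rightarrow> 'a set \<Rightarrow> bool" where
  "prime_ideal_of R P \<longleftrightarrow> ideal_of R P \<and> P \<noteq> R \<and>
     (\<forall>a\<in>R. \<forall>b\<in>R. a * b \<in> P \<longrightarrow> a \<in> P \<or> b \<in> P)"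

definition Rspan :: "'a::field set \<Rightarrow> 'a set \<Rightarrow> 'a set" where
  "Rspan R F = {\<Sum>x\<in>F. g x * x | g. \<forall>x\<in>F. g x \<in> R}"

text \<open>Length l_R(M/N) of the quotient of R-submodules N \<subseteq> M of K: the maximal length
  of a strictly increasing chain of R-submodules from N to M.\<close>
definition len :: "'a::field set \<Rightarrow> 'a set \<Rightarrow> 'a set \<Rightarrow> nat" where
  "len R M N = Sup {n. \<exists>f::nat \<Rightarrow> 'a set. f 0 = N \<and> f n = M \<and>
       (\<forall>i<n. f i \<subset> f (Suc i)) \<and> (\<forall>i\<le>n. Rmod R (f i))}"

definition colon :: "'a::field set \<Rightarrow> 'a set \<Rightarrow> 'a set" where
  "colon N M = {z. \<forall>y\<in>M. z * y \<in> N}"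

definition maxideal :: "'a::field set \<Rightarrow> 'a set" where
  "maxideal R = {a\<in>R. \<not> (\<exists>b\<in>R. a * b = 1)}"

definition integral_over :: "'a::field set \<Rightarrow> 'a \<Rightarrow> bool" where
  "integral_over R z \<longleftrightarrow> (\<exists>n c. (\<forall>i<n. c i \<in> R) \<and> z ^ n + (\<Sum>i<n. c i * z ^ i) = 0)"

text \<open>Valuation ring of v (with v only meaningful on nonzero elements).\<close>
definition vring :: "('a::field \<Rightarrow> int) \<Rightarrow> 'a set" where
  "vring v = {z. z = 0 \<or> 0 \<le> v z}"

definition setting :: "'a::field set \<Rightarrow> ('a \<Rightarrow> int) \<Rightarrow> bool" where
  "setting R v \<longleftrightarrow>
     \<comment> \<open>R is a subring (domain) of K\<close>
     0 \<in> R \<and> 1 \<in> R \<and> (\<forall>a\<in>R. \<forall>b\<in>R. a + b \<in> R \<and> a - b \<in> R \<and> a * b \<in> R) \<and>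
     \<comment> \<open>K is the quotient field of R\<close>
     (\<forall>z. \<exists>a\<in>R. \<exists>b\<in>R. b \<noteq> 0 \<and> z = a / b) \<and>
     \<comment> \<open>Noetherian\<close>
     (\<forall>I. ideal_of R I \<longrightarrow> (\<exists>F. finite F \<and> F \<subseteq> I \<and> I = Rspan R F)) \<and>
     \<comment> \<open>local with maximal ideal m = nonunits\<close>
     ideal_of R (maxideal R) \<and>
     \<comment> \<open>one-dimensional: the prime ideals are exactly 0 and m, with m nonzero\<close>
     maxideal R \<noteq> {0} \<and> (\<forall>P. prime_ideal_of R P \<longleftrightarrow> P = {0} \<or> P = maxideal R) \<and>
     \<comment> \<open>v is a discrete valuation of K, normalized\<close>
     (\<forall>x y. x \<noteq> 0 \<longrightarrow> y \<noteq> 0 \<longrightarrow> v (x * y) = v x + v y) \<and>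
     (\<forall>x y. x \<noteq> 0 \<longrightarrow> y \<noteq> 0 \<longrightarrow> x + y \<noteq> 0 \<longrightarrow> min (v x) (v y) \<le> v (x + y)) \<and>
     (\<exists>t. t \<noteq> 0 \<and> v t = 1) \<and>
     \<comment> \<open>the integral closure of R in K is the valuation ring of v (a DVR)\<close>
     vring v = {z. integral_over R z} \<and>
     \<comment> \<open>and a finite R-module\<close>
     (\<exists>F. finite F \<and> F \<subseteq> vring v \<and> vring v = Rspan R F) \<and>
     \<comment> \<open>residually rational\<close>
     (\<forall>y\<in>vring v. \<exists>a\<in>R. y = a \<or> 0 < v (y - a)) \<and>
     \<comment> \<open>not regular\<close>
     R \<noteq> vring v"

definition valset :: "'a::field set \<Rightarrow> ('a \<Rightarrow> int) \<Rightarrow> nat set" where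
  "valset R v = {nat (v a) | a. a \<in> R \<and> a \<noteq> 0}"

definition cond_c :: "'a::field set \<Rightarrow> ('a \<Rightarrow> int) \<Rightarrow> nat" where
  "cond_c R v = (LEAST c. c \<in> valset R v \<and> {c..} \<subseteq> valset R v)"

definition mult_e :: "'a::field set \<Rightarrow> ('a \<Rightarrow> int) \<Rightarrow> nat" where
  "mult_e R v = (LEAST e. e \<in> valset R v \<and> 0 < e)"

definition sval :: "'a::field set \<Rightarrow> ('a \<Rightarrow> int) \<Rightarrow> nat \<Rightarrow> nat" where
  "sval R v i = enumerate (valset R v) i"

definition Rsub :: "'a::field set \<Rightarrow> ('a \<Rightarrow> int) \<Rightarrow> nat \<Rightarrow> 'a set" where
  "Rsub R v i = {a\<in>R. a = 0 \<or> int (sval R v i) \<le> v a}"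

definition rr :: "'a::field set \<Rightarrow> ('a \<Rightarrow> int) \<Rightarrow> nat \<Rightarrow> nat" where
  "rr R v i = len R (colon R (Rsub R v i)) (colon R (Rsub R v (i - 1)))"

definition conductor :: "'a::field set \<Rightarrow> ('a \<Rightarrow> int) \<Rightarrow> 'a set" where
  "conductor R v = colon R (vring v)"

end

theory Submission
  imports Defs
begin

text \<open>
  Every length in the statement is the length of a quotient \<open>M/N\<close> of fractional ideals with
  \<open>val_ge b \<subseteq> N \<subseteq> M \<subseteq> val_ge a\<close>. Since \<open>R\<close> is residually rational, such a length is the number of
  values attained in \<open>M\<close> but not in \<open>N\<close>, so everything reduces to counting in the semigroup
  \<open>S = v(R)\<close>. The elements of \<open>S\<close> missed by \<open>\<CC> + xR\<close> form the Ap\'ery set of \<open>S\<close> with respect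
  to \<open>e\<close> below \<open>c\<close>, which is in bijection with \<open>S \<inter> [c - e, c)\<close>, i.e. with \<open>B\<close>; and
  \<open>(\<CC> :\<^sub>R m) = R \<inter> val_ge (c - e)\<close> gives the same count. The values of \<open>(R :\<^sub>K m)\<close> outside \<open>S\<close>
  are gaps \<open>y\<close> with \<open>y + e \<in> S\<close>, at most one in each nonzero residue class modulo \<open>e\<close>, so
  \<open>r \<le> e - 1\<close>; every integer of \<open>[c - e, c)\<close> outside \<open>S\<close> is such a value, so \<open>e \<le> r + k\<close>.
  Finally \<open>\<Sum>\<^sub>i\<^sub>\<in>\<^sub>B r\<^sub>i\<close> telescopes to the number of values of \<open>(R :\<^sub>K \<CC>)\<close> not attained in
  \<open>(R :\<^sub>K R\<^sub>i\<^sub>0\<^sub>-\<^sub>1)\<close>; these lie in \<open>[1, e)\<close>, and even in \<open>[1, e - 1)\<close> unless \<open>s\<^sub>i\<^sub>0\<^sub>-\<^sub>1 = c - e\<close>,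
  while every \<open>r\<^sub>i \<ge> 1\<close> because \<open>c - 1 \<notin> S\<close>.
\<close>

section \<open>Counting in additive sets of naturals\<close>

lemma card_less_enumerate:
  fixes V :: "nat set"
  assumes inf: "infinite V"
  shows "card {y\<in>V. y < enumerate V i} = i"
proof -
  have "{y\<in>V. y < enumerate V i} = enumerate V ` {..<i}"
  proof
    show "{y\<in>V. y < enumerate V i} \<subseteq> enumerate V ` {..<i}"
    proof
      fix y assume y: "y \<in> {y\<in>V. y < enumerate V i}"
      then obtain j where j: "enumerate V j = y" using enumerate_Ex[OF inf] by blast
      hence "j < i" using y inf by auto
      thus "y \<in> enumerate V ` {..<i}" using j by blast
    qed
    show "enumerate V ` {..<i} \<subseteq> {y\<in>V. y < enumerate V i}"
      using enumerate_in_set[OF inf] inf by auto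
  qed
  moreover have "inj_on (enumerate V) {..<i}"
    using inj_enumerate[OF inf] by (rule inj_on_subset) simp
  ultimately show ?thesis by (simp add: card_image)
qed

lemma enumerate_card_less:
  fixes V :: "nat set"
  assumes inf: "infinite V" and "y \<in> V"
  shows "enumerate V (card {z\<in>V. z < y}) = y"
proof -
  obtain j where j: "enumerate V j = y" using enumerate_Ex[OF inf \<open>y \<in> V\<close>] by blast
  thus ?thesis using card_less_enumerate[OF inf, of j] by simp
qed

lemma card_image_int: "card (int ` X) = card X"
  by (simp add: card_image)

lemma less_mod_eq_imp_eq_add_mult:
  fixes a b e :: nat
  assumes "a < b" and "a mod e = b mod e"
  obtains j where "b = a + e + e * j"
proof -
  obtain q where q: "b - a = e * q" using assms mod_eq_dvd_iff_nat[of a b e] by auto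
  with \<open>a < b\<close> obtain j where "q = Suc j" by (cases q) auto
  with q \<open>a < b\<close> have "b = a + e + e * j" by simp
  thus ?thesis by (rule that)
qed

locale additive_nat_set =
  fixes V :: "nat set"
  assumes add_mem: "x \<in> V \<Longrightarrow> y \<in> V \<Longrightarrow> x + y \<in> V"
begin

lemma add_mult_mem: "w \<in> V \<Longrightarrow> e \<in> V \<Longrightarrow> w + e * q \<in> V"
proof (induction q)
  case (Suc q)
  have "w + e * Suc q = (w + e * q) + e" by simp
  thus ?case using add_mem[OF Suc.IH] Suc.prems by presburger
qed simp

lemma apery_decomposition:
  assumes e: "e \<in> V" "0 < e" and "s \<in> V"
  obtains w q where "w \<in> V" "w < e \<or> w - e \<notin> V" "s = w + e * q"
  using \<open>s \<in> V\<close>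
proof (induction s arbitrary: thesis rule: less_induct)
  case (less s)
  show ?case
  proof (cases "s < e \<or> s - e \<notin> V")
    case True
    thus ?thesis using less.prems(1)[of s 0] less.prems(2) by simp
  next
    case False
    hence "s - e < s" "s - e \<in> V" using e by auto
    then obtain w q where "w \<in> V" "w < e \<or> w - e \<notin> V" "s - e = w + e * q"
      using less.IH by metis
    moreover have "e \<le> s" using False by simp
    ultimately have "s = w + e * Suc q" by simp
    with \<open>w \<in> V\<close> \<open>w < e \<or> w - e \<notin> V\<close> show ?thesis by (rule less.prems(1))
  qed
qed

text \<open>The Ap\'ery elements below \<open>c\<close> are shifted by multiples of \<open>e\<close> onto the window
  \<open>[c - e, c)\<close>, one per residue class.\<close>
lemma card_apery_eq_card_window:
  assumes e: "e \<in> V" "0 < e" "e \<le> c"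
  shows "card {w\<in>V. w < c \<and> (w < e \<or> w - e \<notin> V)} = card {y\<in>V. c - e \<le> y \<and> y < c}"
proof -
  let ?A = "{w\<in>V. w < c \<and> (w < e \<or> w - e \<notin> V)}"
  let ?J = "{y\<in>V. c - e \<le> y \<and> y < c}"
  define shift where "shift w = w + e * ((c - 1 - w) div e)" for w
  have shift_mod: "shift w mod e = w mod e" for w unfolding shift_def by simp
  have "shift w \<in> ?J" if w: "w \<in> ?A" for w
  proof -
    define q where "q = (c - 1 - w) div e"
    have le: "e * q \<le> c - 1 - w" unfolding q_def by simp
    have gt: "c - 1 - w < e * q + e" unfolding q_def
      using e(2) by (metis div_mult_mod_eq mod_less_divisor add_less_cancel_left mult.commute)
    have "w < c" using w by simp
    with le gt have "c - e \<le> shift w \<and> shift w < c" unfolding shift_def q_def[symmetric] by linarith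
    thus ?thesis using w e(1) add_mult_mem unfolding shift_def by auto
  qed
  moreover have "inj_on shift ?A"
  proof
    fix w w' assume w: "w \<in> ?A" and w': "w' \<in> ?A" and "shift w = shift w'"
    hence mod: "w mod e = w' mod e" using shift_mod by metis
    have not_less: False if ab: "a \<in> ?A" "b \<in> ?A" "a < b" "a mod e = b mod e" for a b
    proof -
      obtain j where "b = a + e + e * j" using less_mod_eq_imp_eq_add_mult ab(3,4) by blast
      thus False using add_mult_mem[of a e j] ab(1,2) e(1) by auto
    qed
    show "w = w'" using not_less[OF w w'] not_less[OF w' w] mod by (cases w w' rule: linorder_cases) auto
  qed
  moreover have "?J \<subseteq> shift ` ?A"
  proof
    fix s assume s: "s \<in> ?J"
    then obtain w q where w: "w \<in> V" "w < e \<or> w - e \<notin> V" "s = w + e * q"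
      using apery_decomposition e by blast
    have "c - 1 - w = e * q + (c - 1 - s)" "c - 1 - s < e" using w s e(2) by auto
    hence "(c - 1 - w) div e = q" using e(2) by (simp add: div_add1_eq)
    hence "shift w = s" unfolding shift_def using w by simp
    moreover have "w \<in> ?A" using w s by auto
    ultimately show "s \<in> shift ` ?A" by blast
  qed
  ultimately have "bij_betw shift ?A ?J" unfolding bij_betw_def by blast
  thus ?thesis by (rule bij_betw_same_card)
qed

text \<open>Distinct elements of such a set of gaps lie in distinct nonzero residue classes modulo \<open>e\<close>.\<close>
lemma card_gaps_le:
  assumes "0 \<in> V" "e \<in> V" "0 < e" "finite G" "G \<subseteq> {y. y \<notin> V \<and> y + e \<in> V}"
  shows "card G \<le> e - 1"
proof -
  have "(\<lambda>y. y mod e) ` G \<subseteq> {1..<e}"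
  proof
    fix r assume "r \<in> (\<lambda>y. y mod e) ` G"
    then obtain y where y: "y \<in> G" "r = y mod e" by blast
    have "r \<noteq> 0"
    proof
      assume "r = 0"
      hence "y = 0 + e * (y div e)" using y div_mult_mod_eq[of y e] by (simp add: mult.commute)
      thus False using y assms(1,2,5) add_mult_mem[of 0 e "y div e"] by auto
    qed
    thus "r \<in> {1..<e}" using y assms(3) by auto
  qed
  moreover have "inj_on (\<lambda>y. y mod e) G"
  proof
    have not_less: False if ab: "a \<in> G" "b \<in> G" "a < b" "a mod e = b mod e" for a b
    proof -
      obtain j where "b = (a + e) + e * j" using less_mod_eq_imp_eq_add_mult ab(3,4) by blast
      thus False using add_mult_mem[of "a + e" e j] ab(1,2) assms(2,5) by auto
    qed
    show "a \<in> G \<Longrightarrow> b \<in> G \<Longrightarrow> a mod e = b mod e \<Longrightarrow> a = b" for a b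
      using not_less[of a b] not_less[of b a] by (cases a b rule: linorder_cases) auto
  qed
  ultimately have "card G \<le> card {1..<e}" by (metis card_image card_mono finite_atLeastLessThan)
  thus ?thesis by simp
qed

end

section \<open>Discrete valuations and value sets\<close>

locale discrete_valuation =
  fixes v :: "'a::field \<Rightarrow> int"
  assumes val_mult: "x \<noteq> 0 \<Longrightarrow> y \<noteq> 0 \<Longrightarrow> v (x * y) = v x + v y"
    and val_add: "x \<noteq> 0 \<Longrightarrow> y \<noteq> 0 \<Longrightarrow> x + y \<noteq> 0 \<Longrightarrow> min (v x) (v y) \<le> v (x + y)"
    and uniformizer: "\<exists>t. t \<noteq> 0 \<and> v t = 1"
begin

lemma val_one [simp]: "v 1 = 0"
  using val_mult[of 1 1] by simp

lemma val_inverse: "x \<noteq> 0 \<Longrightarrow> v (inverse x) = - v x"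
  using val_mult[of x "inverse x"] by simp

lemma val_divide: "x \<noteq> 0 \<Longrightarrow> y \<noteq> 0 \<Longrightarrow> v (x / y) = v x - v y"
  by (simp add: divide_inverse val_mult val_inverse)

lemma val_minus [simp]: "v (- x) = v x"
proof (cases "x = 0")
  case False
  have "v (-1) + v (-1) = 0" using val_mult[of "-1" "-1"] by simp
  thus ?thesis using val_mult[of "-1" x] False by simp
qed simp

lemma val_add_eq_left:
  assumes "x \<noteq> 0" "y \<noteq> 0" "v x < v y"
  shows "x + y \<noteq> 0 \<and> v (x + y) = v x"
proof -
  have "x + y \<noteq> 0" using assms by (metis add_eq_0_iff val_minus less_irrefl)
  moreover have "v (x + y) \<le> v x"
    using val_add[of "x + y" "- y"] assms \<open>x + y \<noteq> 0\<close> by auto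
  ultimately show ?thesis using val_add[of x y] assms by simp
qed

lemma ex_val_eq: "\<exists>z. z \<noteq> 0 \<and> v z = j"
proof -
  obtain t where t: "t \<noteq> 0" "v t = 1" using uniformizer by blast
  have pow: "t ^ n \<noteq> 0 \<and> v (t ^ n) = int n" for n
    by (induction n) (auto simp: val_mult t)
  show ?thesis
  proof (cases "0 \<le> j")
    case True thus ?thesis using pow[of "nat j"] by (intro exI[of _ "t ^ nat j"]) auto
  next
    case False thus ?thesis using pow[of "nat (- j)"] val_inverse[of "t ^ nat (- j)"]
      by (intro exI[of _ "inverse (t ^ nat (- j))"]) auto
  qed
qed

definition elem_of_val :: "int \<Rightarrow> 'a" where
  "elem_of_val j = (SOME z. z \<noteq> 0 \<and> v z = j)"

lemma elem_of_val_nonzero: "elem_of_val j \<noteq> 0"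
  and val_elem_of_val [simp]: "v (elem_of_val j) = j"
  using someI_ex[OF ex_val_eq[of j]] unfolding elem_of_val_def by auto

definition val_ge :: "int \<Rightarrow> 'a set" where
  "val_ge b = {z. z = 0 \<or> b \<le> v z}"

definition vals :: "'a set \<Rightarrow> int set" where
  "vals M = v ` (M - {0})"

lemma valsI: "z \<in> M \<Longrightarrow> z \<noteq> 0 \<Longrightarrow> v z \<in> vals M"
  unfolding vals_def by blast

lemma valsE:
  assumes "y \<in> vals M"
  obtains z where "z \<in> M" "z \<noteq> 0" "v z = y"
  using assms unfolding vals_def by blast

lemma vals_mono: "A \<subseteq> B \<Longrightarrow> vals A \<subseteq> vals B"
  unfolding vals_def by blast

lemma val_ge_anti_mono: "b \<le> b' \<Longrightarrow> val_ge b' \<subseteq> val_ge b"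
  unfolding val_ge_def by auto

lemma vring_eq_val_ge: "vring v = val_ge 0"
  unfolding vring_def val_ge_def by auto

lemma vals_val_ge [simp]: "vals (val_ge b) = {b..}"
proof
  show "{b..} \<subseteq> vals (val_ge b)"
    using valsI[of "elem_of_val _" "val_ge b"] elem_of_val_nonzero unfolding val_ge_def by auto
qed (auto simp: val_ge_def elim: valsE)

lemma vals_Int_val_ge: "vals (M \<inter> val_ge b) = vals M \<inter> {b..}"
  unfolding vals_def val_ge_def by auto

lemma mult_mem_val_ge: "z \<in> val_ge b \<Longrightarrow> y \<in> val_ge b' \<Longrightarrow> z * y \<in> val_ge (b + b')"
  unfolding val_ge_def using val_mult[of z y] by (cases "z = 0"; cases "y = 0") auto

lemma add_mem_val_ge: "z \<in> val_ge b \<Longrightarrow> y \<in> val_ge b \<Longrightarrow> z + y \<in> val_ge b"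
  unfolding val_ge_def using val_add[of z y] by fastforce

lemma val_add_val_ge:
  assumes "z \<in> val_ge b" "p \<noteq> 0" "v p < b"
  shows "p + z \<noteq> 0 \<and> v (p + z) = v p"
  using assms val_add_eq_left[of p z] unfolding val_ge_def by (cases "z = 0") auto

lemma finite_vals_diff:
  assumes "val_ge b \<subseteq> N" "M \<subseteq> val_ge a"
  shows "finite (vals M - vals N)"
proof (rule finite_subset)
  show "vals M - vals N \<subseteq> {a..<b}"
    using vals_mono[OF assms(1)] vals_mono[OF assms(2)] by (auto simp: subset_eq not_le)
qed simp

end

section \<open>Lengths as numbers of values\<close>

lemma Rmod_zero: "Rmod R M \<Longrightarrow> 0 \<in> M"
  and Rmod_add: "Rmod R M \<Longrightarrow> x \<in> M \<Longrightarrow> y \<in> M \<Longrightarrow> x + y \<in> M"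
  unfolding Rmod_def by auto

lemma Rmod_Int: "Rmod R A \<Longrightarrow> Rmod R B \<Longrightarrow> Rmod R (A \<inter> B)"
  unfolding Rmod_def by auto

lemma Rmod_sum:
  assumes A: "Rmod R A" and B: "Rmod R B"
  shows "Rmod R {p + q | p q. p \<in> A \<and> q \<in> B}"
  unfolding Rmod_def
proof (intro conjI ballI)
  show "0 \<in> {p + q | p q. p \<in> A \<and> q \<in> B}" using A B unfolding Rmod_def by force
next
  fix x y assume "x \<in> {p + q | p q. p \<in> A \<and> q \<in> B}" "y \<in> {p + q | p q. p \<in> A \<and> q \<in> B}"
  then obtain p q p' q' where "x = p + q" "y = p' + q'" "p \<in> A" "q \<in> B" "p' \<in> A" "q' \<in> B"
    by blast
  moreover have "x + y = (p + p') + (q + q')" using calculation by (simp add: algebra_simps)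
  ultimately show "x + y \<in> {p + q | p q. p \<in> A \<and> q \<in> B}"
    using A B unfolding Rmod_def by blast
next
  fix a x assume "a \<in> R" "x \<in> {p + q | p q. p \<in> A \<and> q \<in> B}"
  then obtain p q where "x = p + q" "p \<in> A" "q \<in> B" by blast
  moreover have "a * x = a * p + a * q" using calculation by (simp add: algebra_simps)
  ultimately show "a * x \<in> {p + q | p q. p \<in> A \<and> q \<in> B}"
    using A B \<open>a \<in> R\<close> unfolding Rmod_def by blast
qed

lemma Rmod_colon: "Rmod R N \<Longrightarrow> Rmod R (colon N M)"
  unfolding Rmod_def colon_def by (auto simp: distrib_right mult.assoc)

lemma strict_chain_mono:
  assumes "\<forall>i<n. f i \<subset> f (Suc i)" "i \<le> j" "j \<le> n"
  shows "f i \<subseteq> f j"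
  using assms(2,3)
proof (induction j)
  case (Suc j)
  thus ?case using assms(1) by (cases "i = Suc j") (auto simp: less_eq_Suc_le)
qed simp

definition strict_module_chain :: "'a::field set \<Rightarrow> (nat \<Rightarrow> 'a set) \<Rightarrow> nat \<Rightarrow> bool" where
  "strict_module_chain R f n \<longleftrightarrow> (\<forall>i<n. f i \<subset> f (Suc i)) \<and> (\<forall>i\<le>n. Rmod R (f i))"

lemma strict_module_chain_extend:
  assumes "strict_module_chain R g d" "g d \<subset> M" "Rmod R M"
  shows "strict_module_chain R (g(Suc d := M)) (Suc d)"
  unfolding strict_module_chain_def
proof (intro conjI allI impI)
  fix i
  show "i < Suc d \<Longrightarrow> (g(Suc d := M)) i \<subset> (g(Suc d := M)) (Suc i)"
    using assms(1,2) unfolding strict_module_chain_def by (cases "i = d") auto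
  show "i \<le> Suc d \<Longrightarrow> Rmod R ((g(Suc d := M)) i)"
    using assms(1,3) unfolding strict_module_chain_def by (cases "i = Suc d") auto
qed

lemma len_eq_Sup_chains:
  "len R M N = Sup {n. \<exists>f. f 0 = N \<and> f n = M \<and> strict_module_chain R f n}"
  unfolding len_def strict_module_chain_def by simp

locale residually_rational_subring = discrete_valuation v for v :: "'a::field \<Rightarrow> int" +
  fixes R :: "'a set"
  assumes R_zero: "0 \<in> R" and R_one: "1 \<in> R"
    and R_add: "a \<in> R \<Longrightarrow> b \<in> R \<Longrightarrow> a + b \<in> R"
    and R_minus: "a \<in> R \<Longrightarrow> - a \<in> R"
    and R_mult: "a \<in> R \<Longrightarrow> b \<in> R \<Longrightarrow> a * b \<in> R"
    and val_nonneg: "a \<in> R \<Longrightarrow> a \<noteq> 0 \<Longrightarrow> 0 \<le> v a"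
    and residually_rational: "y \<in> vring v \<Longrightarrow> \<exists>a\<in>R. y = a \<or> 0 < v (y - a)"
begin

lemma R_subset_val_ge: "R \<subseteq> val_ge 0"
  unfolding val_ge_def using val_nonneg by auto

lemma Rmod_R: "Rmod R R"
  unfolding Rmod_def using R_zero R_add R_mult by auto

lemma Rmod_val_ge: "Rmod R (val_ge b)"
proof -
  have "a * x \<in> val_ge b" if "a \<in> R" "x \<in> val_ge b" for a x
    using mult_mem_val_ge[of a 0 x b] that R_subset_val_ge by auto
  moreover have "0 \<in> val_ge b" unfolding val_ge_def by simp
  ultimately show ?thesis unfolding Rmod_def using add_mem_val_ge by blast
qed

lemma Rmod_diff: "Rmod R M \<Longrightarrow> x \<in> M \<Longrightarrow> y \<in> M \<Longrightarrow> x - y \<in> M"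
  unfolding Rmod_def using R_minus[OF R_one] by (metis diff_conv_add_uminus mult_minus1)

lemma Rmod_multiples: "Rmod R {x * a | a. a \<in> R}"
  unfolding Rmod_def
proof (intro conjI ballI)
  show "0 \<in> {x * a | a. a \<in> R}" using R_zero by (intro CollectI exI[of _ 0]) simp
next
  fix p q assume "p \<in> {x * a | a. a \<in> R}" "q \<in> {x * a | a. a \<in> R}"
  then obtain a b where "p = x * a" "q = x * b" "a \<in> R" "b \<in> R" by blast
  thus "p + q \<in> {x * a | a. a \<in> R}" using R_add by (intro CollectI exI[of _ "a + b"]) (simp add: distrib_left)
next
  fix r p assume "r \<in> R" "p \<in> {x * a | a. a \<in> R}"
  then obtain a where "p = x * a" "a \<in> R" by blast
  thus "r * p \<in> {x * a | a. a \<in> R}" using R_mult \<open>r \<in> R\<close>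
    by (intro CollectI exI[of _ "r * a"]) (simp add: ac_simps)
qed

text \<open>The only place where residual rationality is used: \<open>w / a\<close> has value \<open>0\<close>, so it is
  congruent to some \<open>u \<in> R\<close> modulo the maximal ideal of \<open>vring v\<close>.\<close>
lemma exists_larger_val_outside:
  assumes A: "Rmod R A" and A': "Rmod R A'" and "A \<subseteq> A'"
    and w: "w \<in> A'" "w \<notin> A" "v w \<in> vals A"
  obtains w' where "w' \<in> A'" "w' \<notin> A" "v w < v w'"
proof -
  have "w \<noteq> 0" using w A unfolding Rmod_def by auto
  obtain a where a: "a \<in> A" "a \<noteq> 0" "v a = v w" using w(3) by (rule valsE)
  have "w / a \<in> vring v" unfolding vring_def using val_divide[OF \<open>w \<noteq> 0\<close> a(2)] a by simp
  then obtain u where u: "u \<in> R" "w / a = u \<or> 0 < v (w / a - u)" using residually_rational by blast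
  have ua: "u * a \<in> A" using A u(1) a(1) unfolding Rmod_def by blast
  have "w \<noteq> u * a" using ua w(2) by blast
  hence ne: "w / a - u \<noteq> 0" and pos: "0 < v (w / a - u)" using u(2) a(2) by (auto simp: field_simps)
  show ?thesis
  proof
    show "w - u * a \<in> A'" using Rmod_diff[OF A' w(1)] ua \<open>A \<subseteq> A'\<close> by blast
    show "w - u * a \<notin> A" using Rmod_diff[OF A, of "w - u * a" "- (u * a)"] ua w(2) A
      unfolding Rmod_def by (metis diff_add_cancel)
    have "w - u * a = a * (w / a - u)" using a(2) by (simp add: field_simps)
    thus "v w < v (w - u * a)" using val_mult[OF a(2) ne] pos a(3) by simp
  qed
qed

lemma submodule_eq_if_vals_subset:
  assumes A: "Rmod R A" and A': "Rmod R A'" and "A \<subseteq> A'" and "val_ge b \<subseteq> A"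
    and "vals A' \<subseteq> vals A"
  shows "A' = A"
proof -
  have "w \<notin> A' - A" for w
  proof (induction "nat (b - v w)" arbitrary: w rule: less_induct)
    case less
    show ?case
    proof
      assume w: "w \<in> A' - A"
      hence "w \<notin> val_ge b" using \<open>val_ge b \<subseteq> A\<close> by blast
      hence "w \<noteq> 0" "v w < b" unfolding val_ge_def by auto
      hence "v w \<in> vals A" using w valsI \<open>vals A' \<subseteq> vals A\<close> by blast
      then obtain w' where w': "w' \<in> A'" "w' \<notin> A" "v w < v w'"
        using exists_larger_val_outside[OF A A' \<open>A \<subseteq> A'\<close>] w by blast
      hence "w' \<notin> val_ge b" using \<open>val_ge b \<subseteq> A\<close> by blast
      hence "v w' < b" unfolding val_ge_def by auto
      hence "nat (b - v w') < nat (b - v w)" using w' \<open>v w < b\<close> by simp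
      thus False using less w' by blast
    qed
  qed
  thus ?thesis using \<open>A \<subseteq> A'\<close> by blast
qed

lemma vals_sum_Int_val_ge:
  assumes N: "Rmod R N" and M: "Rmod R M" and "N \<subseteq> M"
  shows "vals {p + q | p q. p \<in> N \<and> q \<in> M \<inter> val_ge b} - vals N = (vals M - vals N) \<inter> {b..}"
    (is "vals ?S - _ = _")
proof
  have "?S \<subseteq> M" using Rmod_add[OF M] \<open>N \<subseteq> M\<close> by blast
  hence sub: "vals ?S \<subseteq> vals M" by (rule vals_mono)
  have low: "y \<in> vals N" if y: "y \<in> vals ?S" "y < b" for y
  proof -
    obtain z where z: "z \<in> ?S" "z \<noteq> 0" "v z = y" using y(1) by (rule valsE)
    then obtain p q where pq: "z = p + q" "p \<in> N" "q \<in> val_ge b" by blast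
    have "- q \<in> val_ge b" using pq(3) unfolding val_ge_def by simp
    hence "p \<noteq> 0 \<and> v p = y" using val_add_val_ge[of "- q" b z] z y(2) pq(1) by simp
    thus ?thesis using pq(2) valsI by blast
  qed
  show "vals ?S - vals N \<subseteq> (vals M - vals N) \<inter> {b..}"
  proof
    fix y assume y: "y \<in> vals ?S - vals N"
    hence "\<not> y < b" using low by blast
    thus "y \<in> (vals M - vals N) \<inter> {b..}" using y sub by auto
  qed
next
  show "(vals M - vals N) \<inter> {b..} \<subseteq> vals ?S - vals N"
  proof
    fix y assume y: "y \<in> (vals M - vals N) \<inter> {b..}"
    then obtain z where z: "z \<in> M" "z \<noteq> 0" "v z = y" by (auto elim: valsE)
    have "z \<in> val_ge b" "0 \<in> N" using z y Rmod_zero[OF N] unfolding val_ge_def by auto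
    hence "z \<in> ?S" using z by (intro CollectI exI[of _ 0] exI[of _ z]) simp
    thus "y \<in> vals ?S - vals N" using valsI[of z ?S] z y by simp
  qed
qed

lemma strict_chain_length_le:
  assumes "val_ge b \<subseteq> N" "M \<subseteq> val_ge a"
    and f: "f 0 = N" "f n = M" "strict_module_chain R f n"
  shows "n \<le> card (vals M - vals N)"
proof -
  have fin: "finite (vals M - vals N)" using finite_vals_diff assms(1,2) .
  have chain: "\<forall>i<n. f i \<subset> f (Suc i)" and mods: "\<forall>i\<le>n. Rmod R (f i)"
    using f(3) unfolding strict_module_chain_def by auto
  have between: "N \<subseteq> f i \<and> f i \<subseteq> M" if "i \<le> n" for i
    using strict_chain_mono[OF chain, of 0 i] strict_chain_mono[OF chain, of i n] f that by auto
  have "i \<le> card (vals (f i) - vals N)" if "i \<le> n" for i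
    using that
  proof (induction i)
    case (Suc i)
    have psub: "f i \<subset> f (Suc i)" using chain Suc.prems by simp
    have "vals (f (Suc i)) \<noteq> vals (f i)"
      using submodule_eq_if_vals_subset[of "f i" "f (Suc i)" b] psub mods Suc.prems
        between[of i] assms(1) by auto
    hence psub_vals: "vals (f i) - vals N \<subset> vals (f (Suc i)) - vals N"
      using vals_mono[of "f i" "f (Suc i)"] vals_mono[of N "f i"] psub between[of i] Suc.prems
      by auto
    have "vals (f (Suc i)) - vals N \<subseteq> vals M - vals N"
      using vals_mono[of "f (Suc i)" M] between[OF Suc.prems] by blast
    hence "finite (vals (f (Suc i)) - vals N)" using fin by (rule finite_subset)
    hence "card (vals (f i) - vals N) < card (vals (f (Suc i)) - vals N)"
      using psub_vals by (rule psubset_card_mono)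
    thus ?case using Suc by simp
  qed simp
  thus ?thesis using f(2) by fastforce
qed

text \<open>The chain is built by removing the smallest value of \<open>vals M - vals N\<close> at each step.\<close>
lemma ex_strict_chain:
  assumes N: "Rmod R N" and "val_ge b \<subseteq> N"
  shows "Rmod R M \<Longrightarrow> N \<subseteq> M \<Longrightarrow> M \<subseteq> val_ge a \<Longrightarrow> card (vals M - vals N) = d \<Longrightarrow>
    \<exists>f. f 0 = N \<and> f d = M \<and> strict_module_chain R f d"
proof (induction d arbitrary: M)
  case 0
  hence "vals M \<subseteq> vals N" using finite_vals_diff[OF assms(2) 0(3)] by simp
  hence "M = N" using submodule_eq_if_vals_subset[OF N 0(1,2) assms(2)] by blast
  thus ?case using N by (intro exI[of _ "\<lambda>_. N"]) (simp add: strict_module_chain_def)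
next
  case (Suc d)
  let ?D = "vals M - vals N"
  have fin: "finite ?D" using finite_vals_diff[OF assms(2) Suc.prems(3)] .
  moreover have "?D \<noteq> {}" using Suc.prems(4) by (metis card.empty Zero_not_Suc)
  ultimately have m: "Min ?D \<in> ?D" by (rule Min_in)
  define M' where "M' = {p + q | p q. p \<in> N \<and> q \<in> M \<inter> val_ge (Min ?D + 1)}"
  have M': "Rmod R M'" unfolding M'_def by (intro Rmod_sum N Rmod_Int Suc.prems(1) Rmod_val_ge)
  have "N \<subseteq> M'"
  proof
    fix p assume "p \<in> N"
    moreover have "0 \<in> M \<inter> val_ge (Min ?D + 1)" using Rmod_zero[OF Suc.prems(1)] by (simp add: val_ge_def)
    ultimately show "p \<in> M'" unfolding M'_def by (intro CollectI exI[of _ p] exI[of _ 0]) simp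
  qed
  have "M' \<subseteq> M" unfolding M'_def using Rmod_add[OF Suc.prems(1)] Suc.prems(2) by blast
  have "?D \<inter> {Min ?D + 1..} = ?D - {Min ?D}"
  proof
    show "?D - {Min ?D} \<subseteq> ?D \<inter> {Min ?D + 1..}"
    proof
      fix y assume y: "y \<in> ?D - {Min ?D}"
      hence "Min ?D < y" using Min_le[OF fin, of y] by auto
      thus "y \<in> ?D \<inter> {Min ?D + 1..}" using y by auto
    qed
  qed auto
  hence D': "vals M' - vals N = ?D - {Min ?D}"
    unfolding M'_def vals_sum_Int_val_ge[OF N Suc.prems(1,2)] .
  hence "card (vals M' - vals N) = d" using Suc.prems(4) fin m by simp
  then obtain g where g: "g 0 = N" "g d = M'" "strict_module_chain R g d"
    using Suc.IH[OF M' \<open>N \<subseteq> M'\<close>] \<open>M' \<subseteq> M\<close> Suc.prems(3) by blast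
  have "Min ?D \<notin> vals M'" using D' m by blast
  hence "g d \<subset> M" using \<open>M' \<subseteq> M\<close> m g(2) by blast
  note strict_module_chain_extend[OF g(3) this Suc.prems(1)]
  moreover have "(g(Suc d := M)) 0 = N" "(g(Suc d := M)) (Suc d) = M" using g by simp_all
  ultimately show ?case by blast
qed

lemma len_eq_card_vals:
  assumes "Rmod R N" "Rmod R M" "N \<subseteq> M" "val_ge b \<subseteq> N" "M \<subseteq> val_ge a"
  shows "len R M N = card (vals M - vals N)"
  unfolding len_eq_Sup_chains
proof (rule cSup_eq_maximum)
  show "card (vals M - vals N) \<in> {n. \<exists>f. f 0 = N \<and> f n = M \<and> strict_module_chain R f n}"
    using ex_strict_chain[OF assms(1,4,2,3,5) refl] by (rule CollectI)
next
  fix n assume "n \<in> {n. \<exists>f. f 0 = N \<and> f n = M \<and> strict_module_chain R f n}"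
  then obtain f where "f 0 = N" "f n = M" "strict_module_chain R f n" by blast
  thus "n \<le> card (vals M - vals N)" by (rule strict_chain_length_le[OF assms(4,5)])
qed

end

locale analytically_irreducible_ring =
  fixes R :: "'a::field set" and v :: "'a \<Rightarrow> int"
  assumes setting: "setting R v"
begin

lemma R_zero: "0 \<in> R"
  using setting unfolding setting_def by (elim conjE) assumption

lemma R_one: "1 \<in> R"
  using setting unfolding setting_def by (elim conjE) assumption

lemma R_closed: "\<forall>a\<in>R. \<forall>b\<in>R. a + b \<in> R \<and> a - b \<in> R \<and> a * b \<in> R"
  using setting unfolding setting_def by (elim conjE) assumption

lemma quotient_field: "\<forall>z. \<exists>a\<in>R. \<exists>b\<in>R. b \<noteq> 0 \<and> z = a / b"
  using setting unfolding setting_def by (elim conjE) assumption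

lemma val_mult_law: "\<forall>x y. x \<noteq> 0 \<longrightarrow> y \<noteq> 0 \<longrightarrow> v (x * y) = v x + v y"
  using setting unfolding setting_def by (elim conjE) assumption

lemma val_add_law: "\<forall>x y. x \<noteq> 0 \<longrightarrow> y \<noteq> 0 \<longrightarrow> x + y \<noteq> 0 \<longrightarrow> min (v x) (v y) \<le> v (x + y)"
  using setting unfolding setting_def by (elim conjE) assumption

lemma uniformizer_exists: "\<exists>t. t \<noteq> 0 \<and> v t = 1"
  using setting unfolding setting_def by (elim conjE) assumption

lemma vring_eq_integral_closure: "vring v = {z. integral_over R z}"
  using setting unfolding setting_def by (elim conjE) assumption

lemma vring_finite: "\<exists>F. finite F \<and> F \<subseteq> vring v \<and> vring v = Rspan R F"
  using setting unfolding setting_def by (elim conjE) assumption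

lemma residue_field: "\<forall>y\<in>vring v. \<exists>a\<in>R. y = a \<or> 0 < v (y - a)"
  using setting unfolding setting_def by (elim conjE) assumption

lemma not_regular: "R \<noteq> vring v"
  using setting unfolding setting_def by (elim conjE) assumption

lemma R_add: "a \<in> R \<Longrightarrow> b \<in> R \<Longrightarrow> a + b \<in> R"
  and R_diff: "a \<in> R \<Longrightarrow> b \<in> R \<Longrightarrow> a - b \<in> R"
  and R_mult: "a \<in> R \<Longrightarrow> b \<in> R \<Longrightarrow> a * b \<in> R"
  using R_closed by blast+

lemma R_minus: "a \<in> R \<Longrightarrow> - a \<in> R"
  using R_diff[OF R_zero] by fastforce

lemma R_sum: "finite F \<Longrightarrow> (\<And>x. x \<in> F \<Longrightarrow> h x \<in> R) \<Longrightarrow> sum h F \<in> R"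
  by (induction F rule: finite_induct) (auto intro: R_add R_zero)

lemma R_prod: "finite F \<Longrightarrow> (\<And>x. x \<in> F \<Longrightarrow> h x \<in> R) \<Longrightarrow> prod h F \<in> R"
  by (induction F rule: finite_induct) (auto intro: R_mult R_one)

lemma R_power: "a \<in> R \<Longrightarrow> a ^ n \<in> R"
  by (induction n) (auto intro: R_mult R_one)

lemma R_subset_vring: "R \<subseteq> vring v"
proof
  fix a assume "a \<in> R"
  hence "integral_over R a" unfolding integral_over_def
    by (intro exI[of _ 1] exI[of _ "\<lambda>_. - a"]) (simp add: R_minus)
  thus "a \<in> vring v" using vring_eq_integral_closure by blast
qed

sublocale discrete_valuation v
  using val_mult_law val_add_law uniformizer_exists by unfold_locales blast+

sublocale residually_rational_subring v R
proof
  show "a \<in> R \<Longrightarrow> a \<noteq> 0 \<Longrightarrow> 0 \<le> v a" for a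
    using R_subset_vring unfolding vring_def by auto
  show "y \<in> vring v \<Longrightarrow> \<exists>a\<in>R. y = a \<or> 0 < v (y - a)" for y
    using residue_field by blast
qed (use R_zero R_one R_add R_minus R_mult in auto)

text \<open>Multiply an integral equation \<open>u\<^sup>k\<^sup>+\<^sup>1 + \<dots> = 0\<close> of \<open>u\<close> by \<open>u\<^sup>-\<^sup>k\<close>.\<close>
lemma mem_if_integral_and_inverse_mem:
  assumes "integral_over R u" and y: "inverse u \<in> R"
  shows "u \<in> R"
proof (cases "u = 0")
  case False
  obtain n cf where cf: "\<forall>i<n. cf i \<in> R" "u ^ n + (\<Sum>i<n. cf i * u ^ i) = 0"
    using assms(1) unfolding integral_over_def by blast
  then obtain k where k: "n = Suc k" by (cases n) auto
  let ?y = "inverse u"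
  have "0 = (u ^ Suc k + (\<Sum>i<Suc k. cf i * u ^ i)) * ?y ^ k" using cf(2) k by simp
  also have "\<dots> = u ^ Suc k * ?y ^ k + (\<Sum>i<Suc k. cf i * u ^ i * ?y ^ k)"
    by (simp only: distrib_right sum_distrib_right)
  also have "u ^ Suc k * ?y ^ k = u * (u * ?y) ^ k" by (simp add: power_mult_distrib)
  also have "\<dots> = u" using False by simp
  also have "(\<Sum>i<Suc k. cf i * u ^ i * ?y ^ k) = (\<Sum>i<Suc k. cf i * ?y ^ (k - i))"
  proof (rule sum.cong)
    fix i assume "i \<in> {..<Suc k}"
    hence "?y ^ k = ?y ^ i * ?y ^ (k - i)" by (simp add: power_add[symmetric])
    hence "cf i * u ^ i * ?y ^ k = cf i * (u * ?y) ^ i * ?y ^ (k - i)"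
      by (simp add: power_mult_distrib)
    thus "cf i * u ^ i * ?y ^ k = cf i * ?y ^ (k - i)" using False by simp
  qed simp
  finally have "u + (\<Sum>i<Suc k. cf i * ?y ^ (k - i)) = 0" by (rule sym)
  hence "u = - (\<Sum>i<Suc k. cf i * ?y ^ (k - i))" by (simp only: eq_neg_iff_add_eq_0)
  also have "\<dots> \<in> R"
    using cf(1) k by (intro R_minus R_sum R_mult R_power y) auto
  finally show ?thesis .
qed (simp add: R_zero)

lemma ex_common_denominator: "\<exists>d\<in>R. d \<noteq> 0 \<and> (\<forall>y\<in>vring v. d * y \<in> R)"
proof -
  obtain F where F: "finite F" "vring v = Rspan R F"
    using vring_finite by blast
  have "\<exists>b. b \<in> R \<and> b \<noteq> 0 \<and> f * b \<in> R" for f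
  proof -
    obtain a b where "a \<in> R" "b \<in> R" "b \<noteq> 0" "f = a / b" using quotient_field by blast
    thus ?thesis by (intro exI[of _ b]) simp
  qed
  then obtain den where den: "\<And>f. den f \<in> R \<and> den f \<noteq> 0 \<and> f * den f \<in> R" by metis
  define d where "d = prod den F"
  have "d * y \<in> R" if y: "y \<in> vring v" for y
  proof -
    obtain g where g: "\<forall>x\<in>F. g x \<in> R" "y = (\<Sum>x\<in>F. g x * x)"
      using y F(2) unfolding Rspan_def by blast
    have "d * (g x * x) = g x * ((x * den x) * prod den (F - {x}))" if "x \<in> F" for x
      unfolding d_def using F(1) that by (simp add: prod.remove ac_simps)
    hence "d * y = (\<Sum>x\<in>F. g x * ((x * den x) * prod den (F - {x})))"
      unfolding g(2) sum_distrib_left by (rule sum.cong[OF refl])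
    also have "\<dots> \<in> R"
    proof (rule R_sum[OF F(1)])
      fix x assume "x \<in> F"
      have "x * den x \<in> R" "prod den (F - {x}) \<in> R"
        using den R_prod[of "F - {x}" den] F(1) by auto
      thus "g x * ((x * den x) * prod den (F - {x})) \<in> R" using g(1) \<open>x \<in> F\<close> R_mult by blast
    qed
    finally show ?thesis .
  qed
  moreover have "d \<in> R" "d \<noteq> 0" unfolding d_def using R_prod[OF F(1)] den F(1) by auto
  ultimately show ?thesis by blast
qed

lemma ex_val_ge_subset_R: "\<exists>b. val_ge b \<subseteq> R"
proof -
  obtain d where d: "d \<in> R" "d \<noteq> 0" "\<forall>y\<in>vring v. d * y \<in> R"
    using ex_common_denominator by blast
  have "z \<in> R" if "z \<in> val_ge (v d)" for z
  proof (cases "z = 0")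
    case False
    hence "z / d \<in> vring v" using that d(2) val_divide unfolding val_ge_def vring_def by simp
    hence "d * (z / d) \<in> R" using d(3) by blast
    thus ?thesis using d(2) by simp
  qed (simp add: R_zero)
  thus ?thesis by blast
qed

lemma mem_valset_iff: "y \<in> valset R v \<longleftrightarrow> int y \<in> vals R"
proof
  assume "y \<in> valset R v"
  then obtain a where "a \<in> R" "a \<noteq> 0" "y = nat (v a)" unfolding valset_def by blast
  thus "int y \<in> vals R" using val_nonneg[of a] valsI[of a R] by simp
next
  assume "int y \<in> vals R"
  then obtain a where "a \<in> R" "a \<noteq> 0" "v a = int y" by (rule valsE)
  thus "y \<in> valset R v" unfolding valset_def by force
qed

lemma vals_R_nonneg: "y \<in> vals R \<Longrightarrow> 0 \<le> y"
  using val_nonneg by (auto elim: valsE)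

lemma mem_vals_R_iff: "0 \<le> y \<Longrightarrow> y \<in> vals R \<longleftrightarrow> nat y \<in> valset R v"
  using mem_valset_iff[of "nat y"] by simp

lemma zero_mem_vals_R: "0 \<in> vals R"
  using valsI[of 1 R] R_one by simp

sublocale valset: additive_nat_set "valset R v"
proof
  fix x y assume "x \<in> valset R v" "y \<in> valset R v"
  then obtain a b where "a \<in> R" "a \<noteq> 0" "v a = int x" "b \<in> R" "b \<noteq> 0" "v b = int y"
    unfolding mem_valset_iff by (metis valsE)
  thus "x + y \<in> valset R v" unfolding mem_valset_iff
    using valsI[of "a * b" R] R_mult val_mult by auto
qed

lemma zero_mem_valset: "0 \<in> valset R v"
  using zero_mem_vals_R mem_valset_iff by simp

lemma ex_atLeast_subset_valset: "\<exists>b. {b..} \<subseteq> valset R v"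
proof -
  obtain b where "val_ge b \<subseteq> R" using ex_val_ge_subset_R by blast
  hence vals: "{b..} \<subseteq> vals R" using vals_mono[of "val_ge b" R] by simp
  have "x \<in> valset R v" if "nat b \<le> x" for x
    using that vals unfolding mem_valset_iff by (auto simp: subset_eq nat_le_iff)
  thus ?thesis by blast
qed

lemma infinite_valset: "infinite (valset R v)"
  using ex_atLeast_subset_valset infinite_Ici finite_subset by blast

lemma atLeast_subset_valset_iff: "{y..} \<subseteq> valset R v \<longleftrightarrow> cond_c R v \<le> y"
proof -
  obtain b where "{b..} \<subseteq> valset R v" using ex_atLeast_subset_valset by blast
  hence ex: "b \<in> valset R v \<and> {b..} \<subseteq> valset R v" by auto
  have "cond_c R v \<in> valset R v \<and> {cond_c R v..} \<subseteq> valset R v"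
    unfolding cond_c_def using ex by (rule LeastI)
  moreover have "{y..} \<subseteq> valset R v \<Longrightarrow> cond_c R v \<le> y"
    unfolding cond_c_def by (rule Least_le) auto
  ultimately show ?thesis by auto
qed

lemma cond_c_mem_valset: "cond_c R v \<in> valset R v"
  using atLeast_subset_valset_iff by auto

lemma mem_vals_R_if_cond_c_le: "int (cond_c R v) \<le> y \<Longrightarrow> y \<in> vals R"
  using atLeast_subset_valset_iff[of "cond_c R v"] mem_vals_R_iff[of y] by auto

lemma val_ge_cond_c_subset_R: "val_ge (int (cond_c R v)) \<subseteq> R"
proof -
  obtain b where b: "val_ge b \<subseteq> R" using ex_val_ge_subset_R by blast
  let ?c = "int (cond_c R v)"
  have "val_ge ?c = R \<inter> val_ge ?c"
  proof (rule submodule_eq_if_vals_subset)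
    show "val_ge (max b ?c) \<subseteq> R \<inter> val_ge ?c"
      using b val_ge_anti_mono[of b "max b ?c"] val_ge_anti_mono[of ?c "max b ?c"] by auto
    show "vals (val_ge ?c) \<subseteq> vals (R \<inter> val_ge ?c)"
      using mem_vals_R_if_cond_c_le by (auto simp: vals_Int_val_ge)
  qed (auto intro: Rmod_Int Rmod_R Rmod_val_ge)
  thus ?thesis by blast
qed

lemma conductor_eq_val_ge: "conductor R v = val_ge (int (cond_c R v))"
proof
  show "val_ge (int (cond_c R v)) \<subseteq> conductor R v"
    unfolding conductor_def colon_def vring_eq_val_ge
    using mult_mem_val_ge[of _ "int (cond_c R v)" _ 0] val_ge_cond_c_subset_R by fastforce
next
  show "conductor R v \<subseteq> val_ge (int (cond_c R v))"
  proof
    fix z assume z: "z \<in> conductor R v"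
    hence zy: "z * y \<in> R" if "y \<in> val_ge 0" for y
      using that unfolding conductor_def colon_def vring_eq_val_ge by blast
    show "z \<in> val_ge (int (cond_c R v))"
    proof (cases "z = 0")
      case False
      have "z \<in> R" using zy[of 1] by (simp add: val_ge_def)
      hence "0 \<le> v z" using val_nonneg False by blast
      have "int j \<in> vals R" if "nat (v z) \<le> j" for j
      proof -
        let ?y = "elem_of_val (int j - v z)"
        have "v z \<le> int j" using that \<open>0 \<le> v z\<close> by linarith
        hence "z * ?y \<in> R" using zy[of ?y] by (simp add: val_ge_def)
        thus ?thesis using valsI[of "z * ?y" R] val_mult[OF False] elem_of_val_nonzero False
          by simp
      qed
      hence "{nat (v z)..} \<subseteq> valset R v" by (auto simp: mem_valset_iff)
      hence "cond_c R v \<le> nat (v z)" unfolding atLeast_subset_valset_iff .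
      thus ?thesis using \<open>0 \<le> v z\<close> unfolding val_ge_def by simp linarith
    qed (simp add: val_ge_def)
  qed
qed

lemma cond_c_pos: "0 < cond_c R v"
proof (rule ccontr)
  assume "\<not> 0 < cond_c R v"
  hence "vring v \<subseteq> R" using val_ge_cond_c_subset_R vring_eq_val_ge by simp
  thus False using not_regular R_subset_vring by blast
qed

lemma cond_c_minus_one_notin_vals: "int (cond_c R v) - 1 \<notin> vals R"
proof
  assume "int (cond_c R v) - 1 \<in> vals R"
  hence "cond_c R v - 1 \<in> valset R v" using cond_c_pos mem_valset_iff[of "cond_c R v - 1"] by simp
  moreover have "{cond_c R v..} \<subseteq> valset R v" using atLeast_subset_valset_iff by simp
  moreover have "{cond_c R v - 1..} = insert (cond_c R v - 1) {cond_c R v..}"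
    using cond_c_pos by auto
  ultimately have "{cond_c R v - 1..} \<subseteq> valset R v" by simp
  thus False using atLeast_subset_valset_iff cond_c_pos by simp
qed

text \<open>Since \<open>c - 1\<close> is not a value of \<open>R\<close>, this bounds the values of colon ideals from below.\<close>
lemma colon_val_sum_ne:
  assumes "z \<in> colon R M" "a \<in> M" "z \<noteq> 0" "a \<noteq> 0"
  shows "v z + v a \<noteq> int (cond_c R v) - 1"
  using assms valsI[of "z * a" R] val_mult[of z a] cond_c_minus_one_notin_vals
  unfolding colon_def by auto

lemma mult_e_mem: "mult_e R v \<in> valset R v" and mult_e_pos: "0 < mult_e R v"
proof -
  have "cond_c R v \<in> valset R v \<and> 0 < cond_c R v" using cond_c_mem_valset cond_c_pos by simp
  hence "mult_e R v \<in> valset R v \<and> 0 < mult_e R v" unfolding mult_e_def by (rule LeastI)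
  thus "mult_e R v \<in> valset R v" "0 < mult_e R v" by auto
qed

lemma mult_e_le: "y \<in> valset R v \<Longrightarrow> 0 < y \<Longrightarrow> mult_e R v \<le> y"
  unfolding mult_e_def by (rule Least_le) simp

lemma mult_e_le_cond_c: "mult_e R v \<le> cond_c R v"
  using mult_e_le cond_c_mem_valset cond_c_pos by blast

lemma two_le_mult_e: "2 \<le> mult_e R v"
proof (rule ccontr)
  assume "\<not> 2 \<le> mult_e R v"
  hence "mult_e R v = 1" using mult_e_pos by simp
  hence "y \<in> valset R v" for y
    using valset.add_mult_mem[OF zero_mem_valset mult_e_mem, of y] by simp
  hence "{0..} \<subseteq> valset R v" by blast
  hence "cond_c R v \<le> 0" unfolding atLeast_subset_valset_iff .
  thus False using cond_c_pos by simp
qed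

lemma vals_R_pos_ge_mult_e: "y \<in> vals R \<Longrightarrow> 0 < y \<Longrightarrow> int (mult_e R v) \<le> y"
  using mult_e_le[of "nat y"] mem_vals_R_iff[of y] by linarith

lemma unit_iff_val_zero:
  assumes "a \<in> R" "a \<noteq> 0"
  shows "(\<exists>b\<in>R. a * b = 1) \<longleftrightarrow> v a = 0"
proof
  assume "\<exists>b\<in>R. a * b = 1"
  then obtain b where b: "b \<in> R" "a * b = 1" by blast
  hence "b \<noteq> 0" by auto
  hence "v a + v b = 0" using val_mult[OF assms(2) \<open>b \<noteq> 0\<close>] b(2) by simp
  thus "v a = 0" using val_nonneg[OF assms] val_nonneg[OF b(1) \<open>b \<noteq> 0\<close>] by linarith
next
  assume "v a = 0"
  hence "inverse a \<in> vring v" using val_inverse[OF assms(2)] by (simp add: vring_def)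
  hence "integral_over R (inverse a)" using vring_eq_integral_closure by blast
  hence "inverse a \<in> R" by (rule mem_if_integral_and_inverse_mem) (simp add: assms)
  thus "\<exists>b\<in>R. a * b = 1" using assms(2) by (intro bexI[of _ "inverse a"]) simp_all
qed

lemma maxideal_eq: "maxideal R = R \<inter> val_ge (int (mult_e R v))"
proof (intro set_eqI)
  fix a
  show "a \<in> maxideal R \<longleftrightarrow> a \<in> R \<inter> val_ge (int (mult_e R v))"
  proof (cases "a \<in> R \<and> a \<noteq> 0")
    case True
    hence "0 \<le> v a" "v a \<in> vals R" using val_nonneg valsI by auto
    have "a \<in> maxideal R \<longleftrightarrow> v a \<noteq> 0"
      using unit_iff_val_zero True unfolding maxideal_def by auto
    also have "\<dots> \<longleftrightarrow> int (mult_e R v) \<le> v a"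
      using vals_R_pos_ge_mult_e[OF \<open>v a \<in> vals R\<close>] \<open>0 \<le> v a\<close> mult_e_pos by auto
    finally show ?thesis using True unfolding val_ge_def by simp
  qed (auto simp: maxideal_def val_ge_def)
qed

lemma ex_maxideal_val_mult_e: "\<exists>x\<in>maxideal R. x \<noteq> 0 \<and> v x = int (mult_e R v)"
proof -
  obtain x where x: "x \<in> R" "x \<noteq> 0" "v x = int (mult_e R v)"
    using mult_e_mem unfolding mem_valset_iff by (rule valsE)
  hence "x \<in> maxideal R" unfolding maxideal_eq val_ge_def by simp
  thus ?thesis using x by blast
qed

section \<open>Lengths attached to the conductor and the maximal ideal\<close>

lemma len_vring_R: "len R (vring v) R = card ({..<cond_c R v} - valset R v)"
proof -
  have "len R (vring v) R = card (vals (vring v) - vals R)"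
    using Rmod_R Rmod_val_ge R_subset_vring val_ge_cond_c_subset_R
    by (intro len_eq_card_vals[of R "vring v" "int (cond_c R v)" 0]) (auto simp: vring_eq_val_ge)
  also have "vals (vring v) - vals R = int ` ({..<cond_c R v} - valset R v)"
  proof
    show "vals (vring v) - vals R \<subseteq> int ` ({..<cond_c R v} - valset R v)"
    proof
      fix y assume y: "y \<in> vals (vring v) - vals R"
      hence "0 \<le> y" "y < int (cond_c R v)"
        using mem_vals_R_if_cond_c_le by (auto simp: vring_eq_val_ge not_le[symmetric])
      moreover have "nat y \<notin> valset R v" using y mem_vals_R_iff \<open>0 \<le> y\<close> by blast
      ultimately show "y \<in> int ` ({..<cond_c R v} - valset R v)"
        by (intro image_eqI[of _ _ "nat y"]) auto
    qed
    show "int ` ({..<cond_c R v} - valset R v) \<subseteq> vals (vring v) - vals R"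
      by (auto simp: vring_eq_val_ge mem_valset_iff)
  qed
  finally show ?thesis by (simp add: card_image_int)
qed

abbreviation num_small_vals :: nat where
  "num_small_vals \<equiv> card {y \<in> valset R v. y < cond_c R v}"

lemma cond_c_minus_len_vring: "cond_c R v - len R (vring v) R = num_small_vals"
proof -
  have "card ({..<cond_c R v} - valset R v) + card {y \<in> valset R v. y < cond_c R v}
      = card (({..<cond_c R v} - valset R v) \<union> {y \<in> valset R v. y < cond_c R v})"
    by (rule card_Un_disjoint[symmetric]) auto
  also have "({..<cond_c R v} - valset R v) \<union> {y \<in> valset R v. y < cond_c R v} = {..<cond_c R v}"
    by auto
  finally show ?thesis using len_vring_R by simp
qed

text \<open>These are the \<open>s\<^sub>i\<close> with \<open>i \<in> B\<close>.\<close>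
abbreviation window :: "nat set" where
  "window \<equiv> {y \<in> valset R v. cond_c R v - mult_e R v \<le> y \<and> y < cond_c R v}"

lemma finite_window: "finite window"
  by (rule finite_subset[of _ "{..<cond_c R v}"]) auto

lemma vals_conductor_plus_multiples:
  assumes x: "x \<in> R" "x \<noteq> 0" and "y < int (cond_c R v)"
  shows "y \<in> vals {z + x * a | z a. z \<in> conductor R v \<and> a \<in> R} \<longleftrightarrow> y - v x \<in> vals R"
    (is "_ \<in> vals ?N \<longleftrightarrow> _")
proof
  assume "y \<in> vals ?N"
  then obtain z a where za: "z \<in> val_ge (int (cond_c R v))" "a \<in> R" "z + x * a \<noteq> 0"
    "v (z + x * a) = y"
    unfolding conductor_eq_val_ge by (auto elim!: valsE)
  have "x * a \<notin> val_ge (int (cond_c R v))"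
    using add_mem_val_ge[OF za(1)] za(3,4) \<open>y < int (cond_c R v)\<close> by (force simp: val_ge_def)
  hence "x * a \<noteq> 0" "v (x * a) < int (cond_c R v)" unfolding val_ge_def by auto
  hence "v (x * a) = y" using val_add_val_ge[OF za(1)] za(4) by (metis add.commute)
  moreover have "a \<noteq> 0" using \<open>x * a \<noteq> 0\<close> by simp
  ultimately show "y - v x \<in> vals R" using val_mult[OF x(2)] valsI[OF za(2)] by force
next
  assume "y - v x \<in> vals R"
  then obtain a where a: "a \<in> R" "a \<noteq> 0" "v a = y - v x" by (rule valsE)
  have "0 \<in> conductor R v" unfolding conductor_eq_val_ge val_ge_def by simp
  hence "0 + x * a \<in> ?N" using a(1) by blast
  thus "y \<in> vals ?N" using valsI[of "0 + x * a" ?N] val_mult[OF x(2) a(2)] a x(2) by simp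
qed

lemma conductor_plus_multiples_bounds:
  assumes "x \<in> R"
  shows "Rmod R {z + x * a | z a. z \<in> conductor R v \<and> a \<in> R}"
    and "val_ge (int (cond_c R v)) \<subseteq> {z + x * a | z a. z \<in> conductor R v \<and> a \<in> R}"
    and "{z + x * a | z a. z \<in> conductor R v \<and> a \<in> R} \<subseteq> R"
proof -
  let ?N = "{z + x * a | z a. z \<in> conductor R v \<and> a \<in> R}"
  have N_eq: "?N = {p + q | p q. p \<in> val_ge (int (cond_c R v)) \<and> q \<in> {x * a | a. a \<in> R}}"
    unfolding conductor_eq_val_ge by blast
  show "Rmod R ?N" unfolding N_eq by (intro Rmod_sum Rmod_val_ge Rmod_multiples)
  show "val_ge (int (cond_c R v)) \<subseteq> ?N"
  proof
    fix z assume "z \<in> val_ge (int (cond_c R v))"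
    thus "z \<in> ?N" unfolding conductor_eq_val_ge using R_zero
      by (intro CollectI exI[of _ z] exI[of _ 0]) simp
  qed
  show "?N \<subseteq> R"
  proof
    fix p assume "p \<in> ?N"
    then obtain z a where "p = z + x * a" "z \<in> val_ge (int (cond_c R v))" "a \<in> R"
      unfolding conductor_eq_val_ge by blast
    thus "p \<in> R" using val_ge_cond_c_subset_R assms R_add R_mult by blast
  qed
qed

lemma apery_vals_eq:
  "{y \<in> vals R. y < int (cond_c R v) \<and> y - int (mult_e R v) \<notin> vals R}
    = int ` {w \<in> valset R v. w < cond_c R v \<and> (w < mult_e R v \<or> w - mult_e R v \<notin> valset R v)}"
proof (intro set_eqI iffI)
  let ?e = "mult_e R v"
  fix y assume y: "y \<in> {y \<in> vals R. y < int (cond_c R v) \<and> y - int ?e \<notin> vals R}"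
  hence "0 \<le> y" using vals_R_nonneg by blast
  moreover have "nat y - ?e \<notin> valset R v" if "?e \<le> nat y"
    using y that \<open>0 \<le> y\<close> mem_valset_iff[of "nat y - ?e"] by (simp add: of_nat_diff)
  ultimately show "y \<in> int ` {w \<in> valset R v. w < cond_c R v \<and> (w < ?e \<or> w - ?e \<notin> valset R v)}"
    using y mem_vals_R_iff by (intro image_eqI[of _ _ "nat y"]) auto
next
  let ?e = "mult_e R v"
  fix y assume "y \<in> int ` {w \<in> valset R v. w < cond_c R v \<and> (w < ?e \<or> w - ?e \<notin> valset R v)}"
  then obtain w where w: "y = int w" "w \<in> valset R v" "w < cond_c R v"
    "w < ?e \<or> w - ?e \<notin> valset R v" by blast
  have "int w - int ?e \<notin> vals R"
  proof (cases "w < ?e")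
    case True thus ?thesis using vals_R_nonneg[of "int w - int ?e"] by linarith
  next
    case False thus ?thesis using w(4) mem_valset_iff[of "w - ?e"] by (simp add: of_nat_diff)
  qed
  thus "y \<in> {y \<in> vals R. y < int (cond_c R v) \<and> y - int ?e \<notin> vals R}"
    using w mem_valset_iff by simp
qed

text \<open>The values of \<open>R\<close> missing from \<open>\<CC> + xR\<close> form the Ap\'ery set of \<open>v(R)\<close> with respect to
  \<open>e\<close>, cut off at \<open>c\<close>.\<close>
lemma len_R_conductor_plus_multiples:
  assumes x: "x \<in> maxideal R" "x \<noteq> 0" "v x = int (mult_e R v)"
  shows "len R R {z + x * a | z a. z \<in> conductor R v \<and> a \<in> R} = card window"
    (is "len R R ?N = _")
proof -
  let ?c = "int (cond_c R v)" and ?e = "mult_e R v"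
  have xR: "x \<in> R" using x(1) unfolding maxideal_eq by blast
  note N = conductor_plus_multiples_bounds[OF xR]
  have "len R R ?N = card (vals R - vals ?N)"
    by (rule len_eq_card_vals[OF N(1) Rmod_R N(3) N(2) R_subset_val_ge])
  also have "vals R - vals ?N = {y \<in> vals R. y < ?c \<and> y - int ?e \<notin> vals R}"
  proof -
    have "y \<in> vals ?N" if "?c \<le> y" for y
      using vals_mono[OF N(2)] that by auto
    thus ?thesis using vals_conductor_plus_multiples[OF xR x(2)] x(3)
      by (auto simp: not_le[symmetric])
  qed
  also have "card \<dots> = card window"
    by (simp add: apery_vals_eq card_image_int valset.card_apery_eq_card_window mult_e_mem
        mult_e_pos mult_e_le_cond_c)
  finally show ?thesis .
qed

lemma conductor_colon_maxideal_eq: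
  "{a \<in> R. \<forall>y\<in>maxideal R. a * y \<in> conductor R v}
    = R \<inter> val_ge (int (cond_c R v) - int (mult_e R v))"
proof (intro set_eqI iffI)
  fix a assume a: "a \<in> {a \<in> R. \<forall>y\<in>maxideal R. a * y \<in> conductor R v}"
  obtain x where x: "x \<in> maxideal R" "x \<noteq> 0" "v x = int (mult_e R v)"
    using ex_maxideal_val_mult_e by blast
  have ax: "a * x \<in> val_ge (int (cond_c R v))" using a x(1) conductor_eq_val_ge by auto
  have "a \<in> val_ge (int (cond_c R v) - int (mult_e R v))"
  proof (cases "a = 0")
    case False
    hence "v (a * x) = v a + int (mult_e R v)" using val_mult[OF False x(2)] x(3) by simp
    thus ?thesis using ax False x(2) unfolding val_ge_def by auto
  qed (simp add: val_ge_def)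
  thus "a \<in> R \<inter> val_ge (int (cond_c R v) - int (mult_e R v))" using a by blast
next
  fix a assume a: "a \<in> R \<inter> val_ge (int (cond_c R v) - int (mult_e R v))"
  have "a * y \<in> conductor R v" if "y \<in> maxideal R" for y
    using mult_mem_val_ge[of a "int (cond_c R v) - int (mult_e R v)" y "int (mult_e R v)"] a that
    unfolding conductor_eq_val_ge maxideal_eq by simp
  thus "a \<in> {a \<in> R. \<forall>y\<in>maxideal R. a * y \<in> conductor R v}" using a by blast
qed

lemma len_conductor_colon_maxideal:
  "len R {a \<in> R. \<forall>y\<in>maxideal R. a * y \<in> conductor R v} (conductor R v) = card window"
proof -
  let ?c = "int (cond_c R v)" and ?e = "int (mult_e R v)"
  have "len R (R \<inter> val_ge (?c - ?e)) (val_ge ?c) = card (vals (R \<inter> val_ge (?c - ?e)) - vals (val_ge ?c))"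
    using val_ge_cond_c_subset_R val_ge_anti_mono[of "?c - ?e" ?c] mult_e_pos
    by (intro len_eq_card_vals[of _ _ ?c "?c - ?e"]) (auto intro: Rmod_Int Rmod_R Rmod_val_ge)
  also have "vals (R \<inter> val_ge (?c - ?e)) - vals (val_ge ?c) = int ` window"
  proof (intro set_eqI iffI)
    fix y assume "y \<in> vals (R \<inter> val_ge (?c - ?e)) - vals (val_ge ?c)"
    hence y: "y \<in> vals R" "?c - ?e \<le> y" "y < ?c" by (auto simp: vals_Int_val_ge)
    thus "y \<in> int ` window"
      using vals_R_nonneg[OF y(1)] mem_vals_R_iff[of y] mult_e_le_cond_c
      by (intro image_eqI[of _ _ "nat y"]) (auto simp: of_nat_diff)
  next
    fix y assume "y \<in> int ` window"
    thus "y \<in> vals (R \<inter> val_ge (?c - ?e)) - vals (val_ge ?c)"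
      using mult_e_le_cond_c by (auto simp: vals_Int_val_ge mem_valset_iff of_nat_diff)
  qed
  finally show ?thesis
    by (subst conductor_colon_maxideal_eq, subst conductor_eq_val_ge) (simp add: card_image_int)
qed

lemma colon_maxideal_subset_val_ge: "colon R (maxideal R) \<subseteq> val_ge (- int (mult_e R v))"
proof
  fix z assume z: "z \<in> colon R (maxideal R)"
  obtain x where x: "x \<in> maxideal R" "x \<noteq> 0" "v x = int (mult_e R v)"
    using ex_maxideal_val_mult_e by blast
  have zx: "z * x \<in> R" using z x(1) unfolding colon_def by blast
  show "z \<in> val_ge (- int (mult_e R v))"
  proof (cases "z = 0")
    case False
    hence "v (z * x) = v z + int (mult_e R v)" using val_mult[OF False x(2)] x(3) by simp
    thus ?thesis using val_nonneg[OF zx] False x(2) unfolding val_ge_def by auto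
  qed (simp add: val_ge_def)
qed

lemma len_colon_maxideal:
  "len R (colon R (maxideal R)) R = card (vals (colon R (maxideal R)) - vals R)"
proof (rule len_eq_card_vals[OF Rmod_R _ _ val_ge_cond_c_subset_R colon_maxideal_subset_val_ge])
  show "Rmod R (colon R (maxideal R))" using Rmod_colon[OF Rmod_R] .
  show "R \<subseteq> colon R (maxideal R)"
    unfolding colon_def maxideal_eq using R_mult by blast
qed

text \<open>Each value \<open>y\<close> of \<open>(R :\<^sub>K m)\<close> outside \<open>v(R)\<close> is a gap with \<open>y + e\<close> in \<open>v(R)\<close>; such
  gaps lie in distinct nonzero residue classes modulo \<open>e\<close>.\<close>
lemma len_colon_maxideal_le: "len R (colon R (maxideal R)) R \<le> mult_e R v - 1"
proof -
  let ?e = "mult_e R v"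
  let ?G = "{y. y < cond_c R v \<and> y \<notin> valset R v \<and> y + ?e \<in> valset R v}"
  have finG: "finite ?G" by (rule finite_subset[of _ "{..<cond_c R v}"]) auto
  have sub: "vals (colon R (maxideal R)) - vals R \<subseteq> int ` ?G"
  proof
    fix y assume y: "y \<in> vals (colon R (maxideal R)) - vals R"
    then obtain z where z: "z \<in> colon R (maxideal R)" "z \<noteq> 0" "v z = y" by (auto elim: valsE)
    obtain x where x: "x \<in> maxideal R" "x \<noteq> 0" "v x = int ?e"
      using ex_maxideal_val_mult_e by blast
    have "z * x \<in> R" "z * x \<noteq> 0" using z x unfolding colon_def by auto
    moreover have "v (z * x) = y + int ?e" using val_mult[OF z(2) x(2)] z(3) x(3) by simp
    ultimately have ye: "y + int ?e \<in> vals R" using valsI by metis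
    have "0 \<le> y"
    proof (rule ccontr)
      assume "\<not> 0 \<le> y"
      hence "y + int ?e = 0" using vals_R_nonneg[OF ye] vals_R_pos_ge_mult_e[OF ye] by linarith
      let ?a = "elem_of_val (int (cond_c R v) - 1 + int ?e)"
      have "?a \<in> maxideal R" unfolding maxideal_eq
        using val_ge_cond_c_subset_R cond_c_pos mult_e_pos elem_of_val_nonzero
        by (auto simp: val_ge_def)
      hence "y + (int (cond_c R v) - 1 + int ?e) \<noteq> int (cond_c R v) - 1"
        using colon_val_sum_ne[OF z(1) _ z(2) elem_of_val_nonzero] z(3) by simp
      thus False using \<open>y + int ?e = 0\<close> by linarith
    qed
    moreover have "\<not> int (cond_c R v) \<le> y" using y mem_vals_R_if_cond_c_le by blast
    ultimately show "y \<in> int ` ?G"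
      using y ye mem_vals_R_iff[of y] mem_vals_R_iff[of "y + int ?e"]
      by (intro image_eqI[of _ _ "nat y"]) (auto simp: nat_add_distrib)
  qed
  have "card (vals (colon R (maxideal R)) - vals R) \<le> card (int ` ?G)"
    using finite_imageI[OF finG] sub by (rule card_mono)
  also have "\<dots> = card ?G" by (rule card_image_int)
  also have "card ?G \<le> ?e - 1"
    using zero_mem_valset mult_e_mem mult_e_pos by (intro valset.card_gaps_le) auto
  finally show ?thesis using len_colon_maxideal by simp
qed

lemma mult_e_le_len_colon_maxideal: "mult_e R v \<le> len R (colon R (maxideal R)) R + card window"
proof -
  let ?c = "cond_c R v" and ?e = "mult_e R v"
  have sub: "int ` ({?c - ?e..<?c} - valset R v) \<subseteq> vals (colon R (maxideal R)) - vals R"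
  proof
    fix y assume "y \<in> int ` ({?c - ?e..<?c} - valset R v)"
    then obtain w where w: "y = int w" "?c - ?e \<le> w" "w < ?c" "w \<notin> valset R v" by auto
    have "?c \<le> w + ?e" using w(2) by (simp add: le_diff_conv)
    hence "elem_of_val y \<in> val_ge (int ?c - int ?e)" using w(1) by (simp add: val_ge_def)
    hence "elem_of_val y * q \<in> R" if "q \<in> maxideal R" for q
      using mult_mem_val_ge[of "elem_of_val y" "int ?c - int ?e" q "int ?e"] that
        val_ge_cond_c_subset_R unfolding maxideal_eq by auto
    hence "y \<in> vals (colon R (maxideal R))"
      using valsI[of "elem_of_val y"] elem_of_val_nonzero unfolding colon_def by fastforce
    thus "y \<in> vals (colon R (maxideal R)) - vals R" using w mem_valset_iff by simp
  qed
  have "card ({?c - ?e..<?c} - valset R v) = card (int ` ({?c - ?e..<?c} - valset R v))"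
    by (rule card_image_int[symmetric])
  also have "\<dots> \<le> len R (colon R (maxideal R)) R"
    unfolding len_colon_maxideal
    using finite_vals_diff[OF val_ge_cond_c_subset_R colon_maxideal_subset_val_ge] sub
    by (rule card_mono)
  finally have "card ({?c - ?e..<?c} - valset R v) \<le> len R (colon R (maxideal R)) R" .
  moreover have "card ({?c - ?e..<?c} - valset R v) + card window = ?e"
  proof -
    have "card ({?c - ?e..<?c} - valset R v) + card window
        = card (({?c - ?e..<?c} - valset R v) \<union> window)"
      using finite_window by (intro card_Un_disjoint[symmetric]) auto
    also have "({?c - ?e..<?c} - valset R v) \<union> window = {?c - ?e..<?c}" by auto
    finally show ?thesis using mult_e_le_cond_c by simp
  qed
  ultimately show ?thesis by linarith
qed

section \<open>The colon ideals \<open>(R :\<^sub>K R\<^sub>i)\<close>\<close>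

lemma sval_mem: "sval R v j \<in> valset R v"
  unfolding sval_def using enumerate_in_set[OF infinite_valset] .

lemma sval_strict_mono: "i < j \<Longrightarrow> sval R v i < sval R v j"
  unfolding sval_def using infinite_valset by simp

lemma sval_num_small_vals: "sval R v num_small_vals = cond_c R v"
  unfolding sval_def using enumerate_card_less[OF infinite_valset cond_c_mem_valset] .

lemma sval_le_cond_c: "j \<le> num_small_vals \<Longrightarrow> sval R v j \<le> cond_c R v"
  using sval_strict_mono[of j num_small_vals] sval_num_small_vals by (cases "j = num_small_vals") auto

lemma Rsub_eq: "Rsub R v j = R \<inter> val_ge (int (sval R v j))"
  unfolding Rsub_def val_ge_def by auto

abbreviation dual_vals :: "nat \<Rightarrow> int set" where
  "dual_vals j \<equiv> vals (colon R (Rsub R v j))"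

lemma R_subset_colon_Rsub: "R \<subseteq> colon R (Rsub R v j)"
  unfolding colon_def Rsub_def using R_mult by auto

lemma colon_Rsub_mono: "i \<le> j \<Longrightarrow> colon R (Rsub R v i) \<subseteq> colon R (Rsub R v j)"
  using sval_strict_mono[of i j] unfolding colon_def Rsub_def by (fastforce simp: le_less)

lemma colon_Rsub_subset_val_ge: "colon R (Rsub R v j) \<subseteq> val_ge (- int (sval R v j))"
proof
  fix z assume z: "z \<in> colon R (Rsub R v j)"
  obtain a where a: "a \<in> R" "a \<noteq> 0" "v a = int (sval R v j)"
    using sval_mem unfolding mem_valset_iff by (rule valsE)
  have "z * a \<in> R" using z a unfolding colon_def Rsub_def by auto
  thus "z \<in> val_ge (- int (sval R v j))"
    using val_nonneg[of "z * a"] val_mult[OF _ a(2), of z] a unfolding val_ge_def by fastforce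
qed

lemma elem_of_val_mem_colon_Rsub:
  assumes "int (cond_c R v) \<le> y + int (sval R v j)"
  shows "elem_of_val y \<in> colon R (Rsub R v j)"
proof -
  have "elem_of_val y * a \<in> R" if "a \<in> Rsub R v j" for a
  proof -
    have "elem_of_val y * a \<in> val_ge (y + int (sval R v j))"
      using that mult_mem_val_ge[of "elem_of_val y" y a] unfolding Rsub_eq val_ge_def by auto
    thus ?thesis using val_ge_cond_c_subset_R val_ge_anti_mono[OF assms] by blast
  qed
  thus ?thesis unfolding colon_def by blast
qed

lemma finite_dual_vals_diff: "j \<le> num_small_vals \<Longrightarrow> finite (dual_vals j - dual_vals i)"
  using colon_Rsub_subset_val_ge[of j] sval_le_cond_c[of j]
    val_ge_anti_mono[of "- int (cond_c R v)" "- int (sval R v j)"]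
    R_subset_colon_Rsub[of i] val_ge_cond_c_subset_R
  by (intro finite_vals_diff[of "int (cond_c R v)" _ _ "- int (cond_c R v)"]) auto

lemma rr_eq_card:
  assumes "1 \<le> i" "i \<le> num_small_vals"
  shows "rr R v i = card (dual_vals i - dual_vals (i - 1))"
  unfolding rr_def
proof (rule len_eq_card_vals)
  show "Rmod R (colon R (Rsub R v (i - 1)))" "Rmod R (colon R (Rsub R v i))"
    by (simp_all add: Rmod_colon Rmod_R)
  show "colon R (Rsub R v (i - 1)) \<subseteq> colon R (Rsub R v i)" by (rule colon_Rsub_mono) simp
  show "val_ge (int (cond_c R v)) \<subseteq> colon R (Rsub R v (i - 1))"
    using val_ge_cond_c_subset_R R_subset_colon_Rsub by blast
  show "colon R (Rsub R v i) \<subseteq> val_ge (- int (cond_c R v))"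
    using colon_Rsub_subset_val_ge[of i] sval_le_cond_c[OF assms(2)]
      val_ge_anti_mono[of "- int (cond_c R v)" "- int (sval R v i)"] by auto
qed

text \<open>The element of value \<open>c - 1 - s\<^sub>i\<^sub>-\<^sub>1\<close> lies in \<open>(R :\<^sub>K R\<^sub>i)\<close> but not in
  \<open>(R :\<^sub>K R\<^sub>i\<^sub>-\<^sub>1)\<close>.\<close>
lemma rr_pos:
  assumes "1 \<le> i" "i \<le> num_small_vals"
  shows "0 < rr R v i"
proof -
  let ?y = "int (cond_c R v) - 1 - int (sval R v (i - 1))"
  have "sval R v (i - 1) < sval R v i" using sval_strict_mono assms(1) by simp
  hence "elem_of_val ?y \<in> colon R (Rsub R v i)" by (intro elem_of_val_mem_colon_Rsub) simp
  hence "?y \<in> dual_vals i" using valsI elem_of_val_nonzero by fastforce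
  moreover have "?y \<notin> dual_vals (i - 1)"
  proof
    assume "?y \<in> dual_vals (i - 1)"
    then obtain z where z: "z \<in> colon R (Rsub R v (i - 1))" "z \<noteq> 0" "v z = ?y" by (rule valsE)
    obtain a where a: "a \<in> R" "a \<noteq> 0" "v a = int (sval R v (i - 1))"
      using sval_mem unfolding mem_valset_iff by (rule valsE)
    have "a \<in> Rsub R v (i - 1)" using a unfolding Rsub_def by simp
    thus False using colon_val_sum_ne[OF z(1) _ z(2) a(2)] z(3) a(3) by simp
  qed
  ultimately have "dual_vals i - dual_vals (i - 1) \<noteq> {}" by blast
  thus ?thesis using rr_eq_card[OF assms] finite_dual_vals_diff[OF assms(2)]
    by (simp add: card_gt_0_iff)
qed

lemma sum_rr_eq_card:
  assumes "j \<le> k" "k \<le> num_small_vals"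
  shows "(\<Sum>i\<in>{Suc j..k}. rr R v i) = card (dual_vals k - dual_vals j)"
  using assms
proof (induction k)
  case (Suc k)
  show ?case
  proof (cases "j = Suc k")
    case False
    hence "j \<le> k" using Suc.prems by simp
    have disj: "(dual_vals (Suc k) - dual_vals k) \<inter> (dual_vals k - dual_vals j) = {}" by blast
    have "dual_vals (Suc k) - dual_vals j = (dual_vals (Suc k) - dual_vals k) \<union> (dual_vals k - dual_vals j)"
      using vals_mono[OF colon_Rsub_mono[of j k]] vals_mono[OF colon_Rsub_mono[of k "Suc k"]]
        \<open>j \<le> k\<close> by auto
    hence "card (dual_vals (Suc k) - dual_vals j)
        = card (dual_vals (Suc k) - dual_vals k) + card (dual_vals k - dual_vals j)"
      using finite_dual_vals_diff Suc.prems disj by (simp add: card_Un_disjoint)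
    also have "\<dots> = rr R v (Suc k) + (\<Sum>i\<in>{Suc j..k}. rr R v i)"
      using rr_eq_card[of "Suc k"] Suc \<open>j \<le> k\<close> by simp
    finally show ?thesis using \<open>j \<le> k\<close> by (simp add: add.commute)
  qed simp
qed simp

text \<open>All values of \<open>(R :\<^sub>K R\<^sub>n) = (R :\<^sub>K \<CC>)\<close> are nonnegative, and those \<open>\<ge> e\<close> already occur in
  \<open>(R :\<^sub>K R\<^sub>j)\<close> once \<open>s\<^sub>j \<ge> c - e\<close>; so the new values lie in \<open>[1, e)\<close>, and in \<open>[1, e - 1)\<close>
  if \<open>s\<^sub>j > c - e\<close>.\<close>
lemma card_dual_vals_diff_le:
  assumes "j \<le> num_small_vals" "cond_c R v - mult_e R v \<le> sval R v j"
  shows "card (dual_vals num_small_vals - dual_vals j) \<le> mult_e R v - 1"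
    and "card (dual_vals num_small_vals - dual_vals j) = mult_e R v - 1
      \<Longrightarrow> sval R v j = cond_c R v - mult_e R v"
proof -
  let ?c = "int (cond_c R v)" and ?e = "int (mult_e R v)" and ?s = "int (sval R v j)"
  have high: "y \<in> dual_vals j" if "?c \<le> y + ?s" for y
    using elem_of_val_mem_colon_Rsub[OF that] valsI elem_of_val_nonzero by fastforce
  have nonneg: "0 \<le> y" if y: "y \<in> dual_vals num_small_vals" for y
  proof (rule ccontr)
    assume "\<not> 0 \<le> y"
    obtain z where z: "z \<in> colon R (Rsub R v num_small_vals)" "z \<noteq> 0" "v z = y"
      using y by (rule valsE)
    have "elem_of_val (?c - 1 - y) \<in> Rsub R v num_small_vals"
      using val_ge_cond_c_subset_R \<open>\<not> 0 \<le> y\<close> elem_of_val_nonzero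
      unfolding Rsub_eq sval_num_small_vals val_ge_def by auto
    hence "v z + v (elem_of_val (?c - 1 - y)) \<noteq> ?c - 1"
      by (rule colon_val_sum_ne[OF z(1) _ z(2) elem_of_val_nonzero])
    thus False using z(3) by simp
  qed
  have "0 \<in> dual_vals j" using zero_mem_vals_R vals_mono[OF R_subset_colon_Rsub] by blast
  have sub: "dual_vals num_small_vals - dual_vals j \<subseteq> {1..<?c - ?s}"
  proof (intro subsetI)
    fix y assume y: "y \<in> dual_vals num_small_vals - dual_vals j"
    hence "y < ?c - ?s" using high by force
    moreover have "0 \<le> y" "y \<noteq> 0" using y \<open>0 \<in> dual_vals j\<close> nonneg by auto
    ultimately show "y \<in> {1..<?c - ?s}" by simp
  qed
  moreover have "?c - ?s \<le> ?e" using assms(2) by linarith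
  ultimately have "card (dual_vals num_small_vals - dual_vals j) \<le> card {1..<?c - ?s}"
    by (intro card_mono) auto
  thus "card (dual_vals num_small_vals - dual_vals j) \<le> mult_e R v - 1"
    using \<open>?c - ?s \<le> ?e\<close> by simp
  assume eq: "card (dual_vals num_small_vals - dual_vals j) = mult_e R v - 1"
  show "sval R v j = cond_c R v - mult_e R v"
    using \<open>card (dual_vals num_small_vals - dual_vals j) \<le> card {1..<?c - ?s}\<close> eq assms(2)
      mult_e_le_cond_c two_le_mult_e by simp
qed

text \<open>By the choice of \<open>s\<^sub>j\<close>, the values \<open>s\<^sub>j, \<dots>, s\<^sub>n\<^sub>-\<^sub>1\<close> are exactly the window.\<close>
lemma card_window_eq:
  assumes "sval R v j = (LEAST y. y \<in> valset R v \<and> cond_c R v - mult_e R v \<le> y)"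
  shows "card window = num_small_vals - j" and "cond_c R v - mult_e R v \<le> sval R v j"
proof -
  let ?c = "cond_c R v" and ?e = "mult_e R v"
  let ?P = "\<lambda>y. y \<in> valset R v \<and> ?c - ?e \<le> y"
  have "?P (Least ?P)" using cond_c_mem_valset by (intro LeastI[of ?P ?c]) simp
  hence sj: "?P (sval R v j)" using assms by simp
  thus "?c - ?e \<le> sval R v j" by simp
  have "{y \<in> valset R v. y < sval R v j} = {y \<in> valset R v. y < ?c - ?e}"
  proof (intro set_eqI iffI)
    fix y assume y: "y \<in> {y \<in> valset R v. y < sval R v j}"
    have "\<not> ?P y"
    proof
      assume "?P y"
      hence "sval R v j \<le> y" unfolding assms by (rule Least_le)
      thus False using y by simp
    qed
    thus "y \<in> {y \<in> valset R v. y < ?c - ?e}" using y by simp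
  qed (use sj in auto)
  hence j: "card {y \<in> valset R v. y < ?c - ?e} = j"
    using card_less_enumerate[OF infinite_valset, of j] unfolding sval_def by simp
  have "card {y \<in> valset R v. y < ?c - ?e} + card window
      = card ({y \<in> valset R v. y < ?c - ?e} \<union> window)"
    using finite_window by (intro card_Un_disjoint[symmetric]) auto
  also have "{y \<in> valset R v. y < ?c - ?e} \<union> window = {y \<in> valset R v. y < ?c}" by auto
  finally show "card window = num_small_vals - j" using j by simp
qed

end

theorem theorem1p4:
  fixes R :: "'a::field set" and v :: "'a \<Rightarrow> int" and x :: 'a and i0 :: nat
  assumes "setting R v"
    and "1 \<le> i0"
    and "i0 \<le> cond_c R v - len R (vring v) R"
    and "sval R v (i0 - 1) = (LEAST y. y \<in> valset R v \<and> cond_c R v - mult_e R v \<le> y)"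
    and "x \<in> maxideal R" and "x \<noteq> 0" and "v x = int (mult_e R v)"
  shows "let c = cond_c R v; \<delta> = len R (vring v) R; n = c - \<delta>;
             r = len R (colon R (maxideal R)) R; e = mult_e R v;
             C = conductor R v; B = {i0..n};
             k = len R R {z + x * a | z a. z \<in> C \<and> a \<in> R};
             Cm = {a\<in>R. \<forall>y\<in>maxideal R. a * y \<in> C}
         in (k = card B \<and> card B = len R Cm C \<and> int e - int r \<le> int k \<and> int e - int r > 0)
          \<and> (k \<le> (\<Sum>i\<in>B. rr R v i) \<and> (\<Sum>i\<in>B. rr R v i) \<le> e - 1
             \<and> ((\<Sum>i\<in>B. rr R v i) = e - 1 \<longrightarrow> sval R v (i0 - 1) = c - e))"
proof -
  interpret analytically_irreducible_ring R v by unfold_locales (fact assms(1))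
  let ?n = num_small_vals and ?j = "i0 - 1"
  have n: "cond_c R v - len R (vring v) R = ?n" by (rule cond_c_minus_len_vring)
  have j: "?j \<le> ?n" using assms(3) n by simp
  have B: "card {i0..?n} = card window" using card_window_eq(1)[OF assms(4)] assms(2) by simp
  have sum_rr: "(\<Sum>i\<in>{i0..?n}. rr R v i) = card (dual_vals ?n - dual_vals ?j)"
    using sum_rr_eq_card[OF j] assms(2) by simp
  have "(\<Sum>i\<in>{i0..?n}. 1) \<le> (\<Sum>i\<in>{i0..?n}. rr R v i)"
    using rr_pos assms(2) by (intro sum_mono) (simp add: Suc_le_eq)
  hence "card {i0..?n} \<le> (\<Sum>i\<in>{i0..?n}. rr R v i)" by simp
  moreover note len_R_conductor_plus_multiples[OF assms(5-7)] len_conductor_colon_maxideal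
    len_colon_maxideal_le mult_e_le_len_colon_maxideal two_le_mult_e
    card_dual_vals_diff_le[OF j card_window_eq(2)[OF assms(4)]]
  ultimately show ?thesis
    unfolding Let_def n sum_rr using B by auto linarith
qed

end
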